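(* Let $\mathcal{K}$ be a convex cone in a finite-dimensional Euclidean space ${\mathbb E}$ and let ${\mathcal F}_t \unlhd \mathcal{K}$ be a face. Consider any sequence constructed as follows: ${\mathcal F}_0=\mathcal{K}$, and as long as there exists a vector $d_i$ with $d_i\in {\mathcal F}_i^*$, $d_i\notin {\mathcal F}_i^{\perp}$ and $d_i\perp {\mathcal F}_t$, choose such a $d_i$ and set ${\mathcal F}_{i+1}={\mathcal F}_i\cap d_i^{\perp}$; stop at the first index $d$ for which no such vector exists. Then this process stops after finitely many steps, and at termination ${\mathcal F}_d={\mathcal F}_t$.
   Context: For a set $S$, $S^*=\{y: \langle y,x\rangle\ge 0\ \forall x\in S\}$ is its dual cone and $S^\perp$ its orthogonal complement; $d\perp S$ means $\langle d,x\rangle=0$ for all $x\in S$. A face $f\unlhd \mathcal{K}$ is a convex subset $f\subseteq\mathcal{K}$ such that $x,y\in\mathcal{K}$, $\tfrac12(x+y)\in f$ imply $x,y\in f$. *)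

theory Defs
  imports "HOL-Analysis.Analysis"
begin

definition dual_cone :: "'a::real_inner set \<Rightarrow> 'a set" where
  "dual_cone S = {y. \<forall>x\<in>S. 0 \<le> inner y x}"

definition orth_compl :: "'a::real_inner set \<Rightarrow> 'a set" where
  "orth_compl S = {y. \<forall>x\<in>S. inner y x = 0}"

definition perp_to :: "'a::real_inner \<Rightarrow> 'a set \<Rightarrow> bool" where
  "perp_to d S \<longleftrightarrow> (\<forall>x\<in>S. inner d x = 0)"

definition fr_admissible :: "'a::real_inner set \<Rightarrow> 'a set \<Rightarrow> 'a \<Rightarrow> bool" where
  "fr_admissible Ft F d \<longleftrightarrow> d \<in> dual_cone F \<and> d \<notin> orth_compl F \<and> perp_to d Ft"

definition fr_step :: "'a::real_inner set \<Rightarrow> 'a set \<Rightarrow> 'a \<Rightarrow> 'a set \<Rightarrow> bool" where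
  "fr_step Ft F d F' \<longleftrightarrow> fr_admissible Ft F d \<and> F' = F \<inter> orth_compl {d}"

end

theory Submission
  imports Defs
begin

text \<open>Each step cuts the current face by a hyperplane through the origin that supports it,
keeps the target face, and misses part of the current face; so the current face shrinks to a
proper face of itself and its affine dimension drops, which bounds the number of steps by
dim K + 1. At termination the current face F is a convex cone having the target face as a face.
If that face were proper, a hyperplane supporting F at a relative interior point of the target
face would contain the origin (F is a cone) and hence the whole target face, but not all of F:
its normal would be a further admissible direction.\<close>

lemma face_of_cone_imp_cone:
  assumes "cone K" "F face_of K"
  shows "cone F"
  unfolding cone_def
proof (intro ballI allI impI)
  fix x and c :: real
  assume x: "x \<in> F" and c: "0 \<le> c"
  have scaled_in_K: "r *\<^sub>R x \<in> K" if "0 \<le> r" for r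
    using assms x that by (meson face_of_imp_subset mem_cone subsetD)
  have ends_in_F: "0 \<in> F \<and> r *\<^sub>R x \<in> F" if "1 < r" for r
  proof (cases "x = 0")
    case False
    have "x \<in> open_segment 0 (r *\<^sub>R x)"
      using that False by (auto simp: in_segment intro!: exI[of _ "1 / r"])
    then show ?thesis
      using face_ofD[OF assms(2) _ _ _ x] scaled_in_K[of 0] scaled_in_K[of r] that by simp
  qed (use x in simp)
  show "c *\<^sub>R x \<in> F"
  proof (cases "1 < c")
    case False
    have "0 \<in> F"
      using ends_in_F[of 2] by simp
    then have "closed_segment 0 x \<subseteq> F"
      using closed_segment_subset x face_of_imp_convex[OF assms(2)] by metis
    moreover have "c *\<^sub>R x \<in> closed_segment 0 x"
      using c False by (auto simp: in_segment)
    ultimately show ?thesis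
      by blast
  qed (use ends_in_F in blast)
qed

lemma face_of_Int_orth_compl_dual:
  fixes F :: "'a::real_inner set"
  assumes "convex F" "d \<in> dual_cone F"
  shows "F \<inter> orth_compl {d} face_of F"
proof -
  have "F \<inter> orth_compl {d} = F \<inter> {x. d \<bullet> x = 0}"
    by (auto simp: orth_compl_def inner_commute)
  then show ?thesis
    using face_of_Int_supporting_hyperplane_ge[OF assms(1), where a=d and b=0] assms(2)
    by (simp add: dual_cone_def)
qed

lemma fr_step_aff_dim_less:
  fixes F :: "'a::euclidean_space set"
  assumes "fr_step Ft F d F'" "convex F"
  shows "F' face_of F" "aff_dim F' < aff_dim F"
proof -
  from assms(1) have d: "d \<in> dual_cone F" "d \<notin> orth_compl F" and F': "F' = F \<inter> orth_compl {d}"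
    by (auto simp: fr_step_def fr_admissible_def)
  then show "F' face_of F"
    using face_of_Int_orth_compl_dual[OF assms(2)] by simp
  moreover have "F' \<noteq> F"
    using d F' by (auto simp: orth_compl_def inner_commute)
  ultimately show "aff_dim F' < aff_dim F"
    using face_of_aff_dim_lt[OF assms(2)] by blast
qed

lemma fr_steps_face_of:
  fixes K :: "'a::euclidean_space set"
  assumes "convex K" "F 0 = K" "\<forall>i<n. fr_step Ft (F i) (d i) (F (Suc i))"
  shows "F n face_of K \<and> aff_dim (F n) + int n \<le> aff_dim K"
  using assms(3)
proof (induction n)
  case 0
  then show ?case using assms(1,2) face_of_refl by simp
next
  case (Suc n)
  then have IH: "F n face_of K" "aff_dim (F n) + int n \<le> aff_dim K"
    by auto
  have "fr_step Ft (F n) (d n) (F (Suc n))"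
    using Suc.prems by simp
  then have "F (Suc n) face_of F n" "aff_dim (F (Suc n)) < aff_dim (F n)"
    using fr_step_aff_dim_less face_of_imp_convex[OF IH(1)] by auto
  with IH show ?case
    using face_of_trans by fastforce
qed

lemma fr_steps_contain_target:
  assumes "Ft \<subseteq> F 0" "\<forall>i<n. fr_step Ft (F i) (d i) (F (Suc i))"
  shows "Ft \<subseteq> F n"
  using assms(2)
proof (induction n)
  case (Suc n)
  then show ?case
    by (auto simp: fr_step_def fr_admissible_def perp_to_def orth_compl_def inner_commute)
qed (use assms(1) in simp)

lemma fr_process_terminates:
  fixes K :: "'a::euclidean_space set"
  assumes "convex K"
  shows "\<not> (\<exists>F d. F 0 = K \<and> (\<forall>i. fr_step Ft (F i) (d i) (F (Suc i))))"
proof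
  assume "\<exists>F d. F 0 = K \<and> (\<forall>i. fr_step Ft (F i) (d i) (F (Suc i)))"
  then obtain F d where "F 0 = K" "\<forall>i. fr_step Ft (F i) (d i) (F (Suc i))"
    by blast
  then have "aff_dim (F n) + int n \<le> aff_dim K" for n
    using fr_steps_face_of[OF assms] by blast
  from this[of "nat (aff_dim K + 2)"] show False
    using aff_dim_geq[of "F (nat (aff_dim K + 2))"] by linarith
qed

lemma fr_admissible_exists:
  fixes F :: "'a::euclidean_space set"
  assumes "convex F" "cone F" "Ft face_of F" "Ft \<noteq> {}" "Ft \<noteq> F"
  shows "\<exists>v. fr_admissible Ft F v"
proof -
  have "convex Ft"
    using assms(3) face_of_imp_convex by blast
  then obtain x where x: "x \<in> rel_interior Ft"
    using assms(4) rel_interior_eq_empty by blast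
  then have "x \<in> Ft" "x \<in> F"
    using rel_interior_subset face_of_imp_subset[OF assms(3)] by auto
  moreover have "x \<notin> rel_interior F"
    using face_of_disjoint_rel_interior[OF assms(3,5)] x rel_interior_subset by blast
  ultimately obtain a where a_le: "\<And>y. y \<in> F \<Longrightarrow> a \<bullet> x \<le> a \<bullet> y"
    and a_less: "\<And>y. y \<in> rel_interior F \<Longrightarrow> a \<bullet> x < a \<bullet> y"
    using supporting_hyperplane_rel_boundary[OF assms(1)] by metis
  \<comment> \<open>The supporting hyperplane passes through the origin because F is a cone.\<close>
  have "0 \<in> F" "2 *\<^sub>R x \<in> F"
    using \<open>x \<in> F\<close> assms(2) cone_contains_0 mem_cone[of F x 2] by auto
  then have ax: "a \<bullet> x = 0"
    using a_le[of 0] a_le[of "2 *\<^sub>R x"] by simp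
  then have "a \<in> dual_cone F"
    using a_le by (auto simp: dual_cone_def)
  moreover obtain y where "y \<in> rel_interior F"
    using assms(1) \<open>x \<in> F\<close> rel_interior_eq_empty by blast
  then have "a \<notin> orth_compl F"
    using a_less ax rel_interior_subset by (force simp: orth_compl_def)
  moreover have "Ft \<inter> {z. a \<bullet> z = 0} = Ft"
  proof (rule ccontr)
    have "\<And>z. z \<in> Ft \<Longrightarrow> 0 \<le> a \<bullet> z"
      using a_le ax face_of_imp_subset[OF assms(3)] by fastforce
    then have "Ft \<inter> {z. a \<bullet> z = 0} face_of Ft"
      using face_of_Int_supporting_hyperplane_ge[OF \<open>convex Ft\<close>, where a=a and b=0] by simp
    moreover assume "Ft \<inter> {z. a \<bullet> z = 0} \<noteq> Ft"
    ultimately show False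
      using face_of_disjoint_rel_interior x ax \<open>x \<in> Ft\<close> by blast
  qed
  then have "perp_to a Ft"
    by (auto simp: perp_to_def)
  ultimately show ?thesis
    unfolding fr_admissible_def by blast
qed

theorem mainTheorem1:
  fixes K Ft :: "'a::euclidean_space set"
  assumes "convex K" and "cone K"
    and "Ft face_of K" and "Ft \<noteq> {}"
  shows "\<not> (\<exists>F d. F 0 = K \<and> (\<forall>i. fr_step Ft (F i) (d i) (F (Suc i))))
       \<and> (\<forall>F d n. F 0 = K \<and> (\<forall>i<n. fr_step Ft (F i) (d i) (F (Suc i)))
              \<and> \<not> (\<exists>v. fr_admissible Ft (F n) v) \<longrightarrow> F n = Ft)"
proof (intro conjI allI impI)
  show "\<not> (\<exists>F d. F 0 = K \<and> (\<forall>i. fr_step Ft (F i) (d i) (F (Suc i))))"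
    using fr_process_terminates[OF assms(1)] .
next
  fix F d n
  assume F: "F 0 = K \<and> (\<forall>i<n. fr_step Ft (F i) (d i) (F (Suc i)))
              \<and> \<not> (\<exists>v. fr_admissible Ft (F n) v)"
  then have face: "F n face_of K"
    using fr_steps_face_of[OF assms(1)] by blast
  moreover have "Ft \<subseteq> F n"
    using F fr_steps_contain_target face_of_imp_subset[OF assms(3)] by metis
  ultimately have "Ft face_of F n"
    using face_of_subset[OF assms(3)] face_of_imp_subset by blast
  then show "F n = Ft"
    using F fr_admissible_exists face_of_imp_convex[OF face]
      face_of_cone_imp_cone[OF assms(2) face] assms(4) by blast
qed

end
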